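(* For every integer $n\geq 2$, the set $\bigcup_{|\lambda|>1}\ker(W_n^{*}-\lambda I)$ spans a dense subspace of $H^2$.
   Context: $H^2$ denotes the Hardy space of analytic functions $f(z)=\sum_{k\ge0}\hat f(k)z^k$ on the open unit disk with $\sum_{k}|\hat f(k)|^2<\infty$. For $n\in\mathbb{N}$, $W_n$ is the bounded operator on $H^2$ given by $W_nf(z)=(1+z+\cdots+z^{n-1})f(z^n)$, and $W_n^{*}$ is its adjoint; $I$ is the identity and $\lambda$ ranges over complex numbers. *)

theory Defs
  imports "HOL-Analysis.Analysis"
begin

text \<open>An element f of H^2 is identified with its Taylor coefficient sequence
  (k \<mapsto> hat f k), f(z) = sum_k hat f k z^k.  H^2 is the set of square-summable sequences.\<close>

definition H2 :: "(nat \<Rightarrow> complex) set" where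
  "H2 = {a. summable (\<lambda>k. (cmod (a k))\<^sup>2)}"

definition h2_inner :: "(nat \<Rightarrow> complex) \<Rightarrow> (nat \<Rightarrow> complex) \<Rightarrow> complex" where
  "h2_inner a b = (\<Sum>k. a k * cnj (b k))"

definition h2_norm :: "(nat \<Rightarrow> complex) \<Rightarrow> real" where
  "h2_norm a = sqrt (\<Sum>k. (cmod (a k))\<^sup>2)"

text \<open>W_n f(z) = (1+z+...+z^(n-1)) f(z^n) = sum_k sum_(j<n) hat f k z^(n k + j),
  so the m-th Taylor coefficient of W_n f is hat f (m div n).\<close>

definition W :: "nat \<Rightarrow> (nat \<Rightarrow> complex) \<Rightarrow> (nat \<Rightarrow> complex)" where
  "W n a = (\<lambda>m. a (m div n))"

definition adjoint_H2 :: "((nat \<Rightarrow> complex) \<Rightarrow> (nat \<Rightarrow> complex)) \<Rightarrow> (nat \<Rightarrow> complex) \<Rightarrow> (nat \<Rightarrow> complex)" where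
  "adjoint_H2 T g = (THE h. h \<in> H2 \<and> (\<forall>f\<in>H2. h2_inner (T f) g = h2_inner f h))"

definition eigenspace_H2 :: "((nat \<Rightarrow> complex) \<Rightarrow> (nat \<Rightarrow> complex)) \<Rightarrow> complex \<Rightarrow> (nat \<Rightarrow> complex) set" where
  "eigenspace_H2 T lam = {g \<in> H2. (\<lambda>k. T g k - lam * g k) = (\<lambda>k. 0)}"

definition cspan_seq :: "(nat \<Rightarrow> complex) set \<Rightarrow> (nat \<Rightarrow> complex) set" where
  "cspan_seq S = {g. \<exists>m (c :: nat \<Rightarrow> complex) v. (\<forall>i<m. v i \<in> S) \<and>
                       g = (\<lambda>k. \<Sum>i<m. c i * v i k)}"

definition dense_in_H2 :: "(nat \<Rightarrow> complex) set \<Rightarrow> bool" where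
  "dense_in_H2 V \<longleftrightarrow> (\<forall>f\<in>H2. \<forall>e>0. \<exists>g\<in>V. h2_norm (\<lambda>k. f k - g k) < e)"

end

(*
  W_n^* W_n = n I, so W_n / sqrt n is an isometry, and every s in ker W_n^* generates
  eigenvectors of W_n^*: for |lam| < sqrt n the series sum_i (lam / n)^i W_n^i s converges
  in H^2, and W_n^* maps it to lam times itself.  Fix 1 < c < sqrt n.  Averaging these
  eigenvectors over lam = c w^j, with w a primitive N-th root of unity, extracts W_n^p s up
  to terms W_n^i s with i >= N, whose total norm is O((c / sqrt n)^N).  So every W_n^p s lies
  in the closed span of the eigenvectors with |lam| > 1.  Finally, the unit vector e_m is
  sum_(p<P) n^-p W_n^p s_p with s_p in ker W_n^*, plus W_n^P e_(m div n^P) / n^P, whose norm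
  is n^(-P/2); hence that closed span is all of H^2.
*)

theory Submission
  imports Defs
begin

lemma sum_block_reindex:
  fixes K d :: nat
  shows "(\<Sum>m\<in>{K * d..<K * d + d}. h m) = (\<Sum>j<d. h (d * K + j))"
  using sum.shift_bounds_nat_ivl[of h 0 "K * d" d] by (simp add: lessThan_atLeast0 algebra_simps)

lemma suminf_le_geometric_tail:
  fixes f :: "nat \<Rightarrow> real"
  assumes "0 \<le> r" "r < 1" "\<And>i. 0 \<le> f i" "\<And>i. f i \<le> (if N \<le> i then K * r ^ i else 0)"
  shows "summable f" and "suminf f \<le> K * r ^ N / (1 - r)"
proof -
  define g where "g i = (if N \<le> i then K * r ^ i else 0)" for i
  have "(\<lambda>i. K * r ^ N * r ^ i) sums (K * r ^ N * (1 / (1 - r)))"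
    using assms(1,2) by (intro sums_mult geometric_sums) simp
  moreover have "(\<lambda>i. g (i + N)) = (\<lambda>i. K * r ^ N * r ^ i)"
    by (simp add: g_def power_add fun_eq_iff)
  ultimately have g: "g sums (K * r ^ N / (1 - r))"
    by (subst sums_zero_iff_shift[symmetric, of N]) (simp_all add: g_def)
  show "summable f"
    using assms(3,4) g by (intro summable_comparison_test[of f g]) (auto simp: g_def sums_summable)
  with g show "suminf f \<le> K * r ^ N / (1 - r)"
    using assms(4) by (metis g_def sums_iff suminf_le)
qed

lemma sum_roots_of_unity_filter:
  fixes N p i :: nat
  assumes "p < N"
  defines "\<omega> \<equiv> exp (2 * of_real pi * \<i> / of_nat N)"
  shows "(\<Sum>j<N. (z * \<omega> ^ j) ^ i / \<omega> ^ (j * p)) = (if i mod N = p then of_nat N * z ^ i else 0)"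
proof -
  have \<omega>_power: "\<omega> ^ m = exp (2 * of_real pi * \<i> * of_nat m / of_nat N)" for m
    unfolding \<omega>_def by (simp add: exp_of_nat_mult[symmetric] algebra_simps)
  define \<zeta> where "\<zeta> = \<omega> ^ i / \<omega> ^ p"
  have "(z * \<omega> ^ j) ^ i / \<omega> ^ (j * p) = z ^ i * \<zeta> ^ j" for j
    by (simp add: \<zeta>_def power_mult_distrib power_divide power_mult[symmetric] mult.commute)
  then have sum: "(\<Sum>j<N. (z * \<omega> ^ j) ^ i / \<omega> ^ (j * p)) = z ^ i * (\<Sum>j<N. \<zeta> ^ j)"
    by (simp add: sum_distrib_left)
  have "\<zeta> = 1 \<longleftrightarrow> i mod N = p"
    using assms(1) complex_root_unity_eq[of N i p] by (simp add: \<zeta>_def \<omega>_power exp_not_eq_zero)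
  moreover have "\<zeta> ^ N = 1"
  proof -
    have "\<omega> ^ N = 1"
      using complex_root_unity[of N 1] assms(1) by (simp add: \<omega>_def)
    then show ?thesis
      by (simp add: \<zeta>_def power_divide power_mult[symmetric] mult.commute[of _ N] power_mult[of \<omega> N])
  qed
  ultimately show ?thesis
    unfolding sum by (auto simp: geometric_sum)
qed

lemma norm_power_div_mult_sqrt:
  assumes "0 < n"
  shows "cmod ((z / of_nat n) ^ i) * sqrt (real n) ^ i = (cmod z / sqrt (real n)) ^ i"
proof -
  have "cmod z / real n * sqrt (real n) = cmod z / sqrt (real n)"
    using assms by (simp add: field_simps real_div_sqrt)
  then show ?thesis
    by (simp add: norm_power norm_divide power_mult_distrib[symmetric])
qed

section \<open>Norm estimates in H2\<close>

lemma h2_norm_nonneg: "a \<in> H2 \<Longrightarrow> 0 \<le> h2_norm a"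
  by (simp add: H2_def h2_norm_def suminf_nonneg)

lemma h2_norm_zero: "h2_norm (\<lambda>k. 0) = 0"
  by (simp add: h2_norm_def)

lemma H2_zero: "(\<lambda>k. 0) \<in> H2"
  by (simp add: H2_def)

lemma L2_set_le_h2_norm:
  assumes "a \<in> H2"
  shows "L2_set (\<lambda>k. cmod (a k)) {..<K} \<le> h2_norm a"
  unfolding L2_set_def h2_norm_def
  using assms by (intro real_sqrt_le_mono sum_le_suminf) (auto simp: H2_def)

lemma H2_if_L2_set_bounded:
  assumes "\<And>K. L2_set (\<lambda>k. cmod (a k)) {..<K} \<le> B"
  shows "a \<in> H2" and "h2_norm a \<le> B"
proof -
  have "0 \<le> B"
    using assms[of 0] by simp
  then have partial: "(\<Sum>k<K. (cmod (a k))\<^sup>2) \<le> B\<^sup>2" for K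
    using assms[of K] by (simp add: L2_set_def sqrt_le_D)
  then have "summable (\<lambda>k. (cmod (a k))\<^sup>2)"
    by (intro summableI_nonneg_bounded) auto
  then show "a \<in> H2"
    by (simp add: H2_def)
  have "(\<Sum>k. (cmod (a k))\<^sup>2) \<le> B\<^sup>2"
    by (rule suminf_le_const) (use \<open>summable _\<close> partial in auto)
  then show "h2_norm a \<le> B"
    unfolding h2_norm_def using \<open>0 \<le> B\<close> by (simp add: real_sqrt_le_iff real_le_lsqrt)
qed

lemma norm_le_h2_norm:
  assumes "a \<in> H2"
  shows "cmod (a k) \<le> h2_norm a"
proof -
  have "cmod (a k) \<le> L2_set (\<lambda>k. cmod (a k)) {..<Suc k}"
    by (rule member_le_L2_set) auto
  with L2_set_le_h2_norm[OF assms] show ?thesis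
    by (meson order_trans)
qed

lemma H2_add:
  assumes "a \<in> H2" "b \<in> H2"
  shows "(\<lambda>k. a k + b k) \<in> H2" and "h2_norm (\<lambda>k. a k + b k) \<le> h2_norm a + h2_norm b"
proof -
  have "L2_set (\<lambda>k. cmod (a k + b k)) {..<K} \<le> h2_norm a + h2_norm b" for K
  proof -
    have "L2_set (\<lambda>k. cmod (a k + b k)) {..<K} \<le> L2_set (\<lambda>k. cmod (a k) + cmod (b k)) {..<K}"
      by (rule L2_set_mono) (auto intro: norm_triangle_ineq)
    also have "\<dots> \<le> L2_set (\<lambda>k. cmod (a k)) {..<K} + L2_set (\<lambda>k. cmod (b k)) {..<K}"
      by (rule L2_set_triangle_ineq)
    finally show ?thesis
      using L2_set_le_h2_norm[OF assms(1), of K] L2_set_le_h2_norm[OF assms(2), of K] by linarith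
  qed
  then show "(\<lambda>k. a k + b k) \<in> H2" and "h2_norm (\<lambda>k. a k + b k) \<le> h2_norm a + h2_norm b"
    by (rule H2_if_L2_set_bounded)+
qed

lemma H2_scale:
  assumes "a \<in> H2"
  shows "(\<lambda>k. c * a k) \<in> H2" and "h2_norm (\<lambda>k. c * a k) = cmod c * h2_norm a"
proof -
  have summable: "summable (\<lambda>k. (cmod (a k))\<^sup>2)"
    using assms by (simp add: H2_def)
  have sq: "(\<lambda>k. (cmod (c * a k))\<^sup>2) = (\<lambda>k. (cmod c)\<^sup>2 * (cmod (a k))\<^sup>2)"
    by (simp add: norm_mult power_mult_distrib)
  show "(\<lambda>k. c * a k) \<in> H2"
    unfolding H2_def mem_Collect_eq sq by (rule summable_mult[OF summable])
  show "h2_norm (\<lambda>k. c * a k) = cmod c * h2_norm a"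
    unfolding h2_norm_def sq suminf_mult[OF summable] by (simp add: real_sqrt_mult)
qed

lemma H2_diff:
  assumes "a \<in> H2" "b \<in> H2"
  shows "(\<lambda>k. a k - b k) \<in> H2"
  using H2_add(1)[OF assms(1) H2_scale(1)[OF assms(2), of "-1"]] by simp

lemma h2_norm_triangle:
  assumes "a \<in> H2" "b \<in> H2" "c \<in> H2"
  shows "h2_norm (\<lambda>k. a k - c k) \<le> h2_norm (\<lambda>k. a k - b k) + h2_norm (\<lambda>k. b k - c k)"
  using H2_add(2)[OF H2_diff[OF assms(1,2)] H2_diff[OF assms(2,3)]] by simp

lemma H2_sum:
  assumes "finite T" "\<And>i. i \<in> T \<Longrightarrow> x i \<in> H2"
  shows "(\<lambda>k. \<Sum>i\<in>T. x i k) \<in> H2" and "h2_norm (\<lambda>k. \<Sum>i\<in>T. x i k) \<le> (\<Sum>i\<in>T. h2_norm (x i))"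
proof -
  have "(\<lambda>k. \<Sum>i\<in>T. x i k) \<in> H2 \<and> h2_norm (\<lambda>k. \<Sum>i\<in>T. x i k) \<le> (\<Sum>i\<in>T. h2_norm (x i))"
    using assms
  proof (induction T rule: finite_induct)
    case (insert j T)
    then have "x j \<in> H2" and IH: "(\<lambda>k. \<Sum>i\<in>T. x i k) \<in> H2"
        "h2_norm (\<lambda>k. \<Sum>i\<in>T. x i k) \<le> (\<Sum>i\<in>T. h2_norm (x i))"
      by auto
    with H2_add[OF \<open>x j \<in> H2\<close> IH(1)] insert.hyps show ?case
      by simp
  qed (simp add: H2_zero h2_norm_zero)
  then show "(\<lambda>k. \<Sum>i\<in>T. x i k) \<in> H2" and "h2_norm (\<lambda>k. \<Sum>i\<in>T. x i k) \<le> (\<Sum>i\<in>T. h2_norm (x i))"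
    by auto
qed

lemma H2_suminf:
  assumes "\<And>i. x i \<in> H2" "\<And>i. h2_norm (x i) \<le> w i" "summable w"
  shows "summable (\<lambda>i. x i k)" and "(\<lambda>k. \<Sum>i. x i k) \<in> H2"
    and "h2_norm (\<lambda>k. \<Sum>i. x i k) \<le> suminf w"
proof -
  have "0 \<le> w i" for i
    using assms(2)[of i] h2_norm_nonneg[OF assms(1)] by (meson order_trans)
  have summable: "summable (\<lambda>i. x i k)" for k
  proof (rule summable_norm_cancel, rule summable_comparison_test[OF _ assms(3)])
    have "norm (norm (x i k)) \<le> w i" for i
      using norm_le_h2_norm[OF assms(1), of i k] assms(2)[of i] by simp
    then show "\<exists>N. \<forall>i\<ge>N. norm (norm (x i k)) \<le> w i"
      by blast
  qed
  then show "summable (\<lambda>i. x i k)" .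
  have "L2_set (\<lambda>k. cmod (\<Sum>i. x i k)) {..<K} \<le> suminf w" for K
  proof (rule LIMSEQ_le_const2)
    show "(\<lambda>I. L2_set (\<lambda>k. cmod (\<Sum>i<I. x i k)) {..<K}) \<longlonglongrightarrow> L2_set (\<lambda>k. cmod (\<Sum>i. x i k)) {..<K}"
      unfolding L2_set_def by (intro tendsto_intros summable_LIMSEQ summable)
    have "L2_set (\<lambda>k. cmod (\<Sum>i<I. x i k)) {..<K} \<le> suminf w" for I
    proof -
      have "L2_set (\<lambda>k. cmod (\<Sum>i<I. x i k)) {..<K} \<le> (\<Sum>i<I. h2_norm (x i))"
        using H2_sum[of "{..<I}" x] L2_set_le_h2_norm assms(1) order_trans by blast
      also have "\<dots> \<le> (\<Sum>i<I. w i)"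
        by (intro sum_mono assms(2))
      also have "\<dots> \<le> suminf w"
        by (rule sum_le_suminf[OF assms(3)]) (use \<open>\<And>i. 0 \<le> w i\<close> in auto)
      finally show ?thesis .
    qed
    then show "\<exists>N. \<forall>I\<ge>N. L2_set (\<lambda>k. cmod (\<Sum>i<I. x i k)) {..<K} \<le> suminf w"
      by blast
  qed
  then show "(\<lambda>k. \<Sum>i. x i k) \<in> H2" and "h2_norm (\<lambda>k. \<Sum>i. x i k) \<le> suminf w"
    by (rule H2_if_L2_set_bounded)+
qed

lemma summable_h2_inner:
  assumes "a \<in> H2" "b \<in> H2"
  shows "summable (\<lambda>k. a k * cnj (b k))"
proof (rule summable_norm_cancel, rule summable_comparison_test)
  show "summable (\<lambda>k. (cmod (a k))\<^sup>2 + (cmod (b k))\<^sup>2)"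
    using assms by (auto simp: H2_def intro: summable_add)
  have "cmod (a k) * cmod (b k) \<le> (cmod (a k))\<^sup>2 + (cmod (b k))\<^sup>2" for k
  proof -
    have "2 * (cmod (a k) * cmod (b k)) \<le> (cmod (a k))\<^sup>2 + (cmod (b k))\<^sup>2"
      using sum_squares_bound[of "cmod (a k)" "cmod (b k)"] by (simp add: mult.assoc)
    moreover have "0 \<le> cmod (a k) * cmod (b k)"
      by simp
    ultimately show ?thesis
      by linarith
  qed
  then show "\<exists>N. \<forall>k\<ge>N. norm (norm (a k * cnj (b k))) \<le> (cmod (a k))\<^sup>2 + (cmod (b k))\<^sup>2"
    by (simp add: norm_mult)
qed

definition unit_vec :: "nat \<Rightarrow> nat \<Rightarrow> complex" where
  "unit_vec q = (\<lambda>k. if k = q then 1 else 0)"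

lemma unit_vec_sq_sums: "(\<lambda>k. (cmod (unit_vec q k))\<^sup>2) sums 1"
proof -
  have "(\<lambda>k. (cmod (unit_vec q k))\<^sup>2) = (\<lambda>k. if k = q then 1 else 0)"
    by (auto simp: unit_vec_def)
  then show ?thesis
    using sums_single[of q "\<lambda>_. 1 :: real"] by simp
qed

lemma unit_vec_in_H2: "unit_vec q \<in> H2"
  using unit_vec_sq_sums by (auto simp: H2_def sums_iff)

lemma h2_norm_unit_vec: "h2_norm (unit_vec q) = 1"
  using unit_vec_sq_sums by (simp add: h2_norm_def sums_iff)

lemma h2_inner_unit_vec: "h2_inner (unit_vec q) h = cnj (h q)"
proof -
  have "(\<lambda>k. unit_vec q k * cnj (h k)) = (\<lambda>k. if k = q then cnj (h k) else 0)"
    by (auto simp: unit_vec_def)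
  then show ?thesis
    unfolding h2_inner_def using sums_single[of q "\<lambda>k. cnj (h k)"] by (simp add: sums_iff)
qed

lemma cspan_seq_zero: "(\<lambda>k. 0) \<in> cspan_seq S"
  unfolding cspan_seq_def by (rule CollectI, rule exI[of _ 0]) simp

lemma cspan_seq_scale:
  assumes "g \<in> cspan_seq S"
  shows "(\<lambda>k. a * g k) \<in> cspan_seq S"
proof -
  obtain m :: nat and c v where v: "\<forall>i<m. v i \<in> S" and g: "g = (\<lambda>k. \<Sum>i<m. c i * v i k)"
    using assms unfolding cspan_seq_def by blast
  have "(\<lambda>k. a * g k) = (\<lambda>k. \<Sum>i<m. (a * c i) * v i k)"
    unfolding g by (simp add: sum_distrib_left mult.assoc)
  with v show ?thesis
    unfolding cspan_seq_def mem_Collect_eq by (intro exI[of _ m] exI[of _ "\<lambda>i. a * c i"] exI[of _ v]) simp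
qed

lemma cspan_seq_add:
  assumes "g \<in> cspan_seq S" "h \<in> cspan_seq S"
  shows "(\<lambda>k. g k + h k) \<in> cspan_seq S"
proof -
  obtain m :: nat and c v where v: "\<forall>i<m. v i \<in> S" and g: "g = (\<lambda>k. \<Sum>i<m. c i * v i k)"
    using assms(1) unfolding cspan_seq_def by blast
  obtain m' :: nat and c' v' where v': "\<forall>i<m'. v' i \<in> S" and h: "h = (\<lambda>k. \<Sum>i<m'. c' i * v' i k)"
    using assms(2) unfolding cspan_seq_def by blast
  define d where "d i = (if i < m then c i else c' (i - m))" for i
  define u where "u i = (if i < m then v i else v' (i - m))" for i
  have "(\<Sum>i<m + m'. d i * u i k) = g k + h k" for k
  proof -
    have "(\<Sum>i<m + m'. d i * u i k) = (\<Sum>i\<in>{0..<m}. d i * u i k) + (\<Sum>i\<in>{m..<m + m'}. d i * u i k)"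
      by (simp add: sum.atLeastLessThan_concat lessThan_atLeast0)
    also have "(\<Sum>i\<in>{m..<m + m'}. d i * u i k) = (\<Sum>i\<in>{0..<m'}. d (i + m) * u (i + m) k)"
      using sum.shift_bounds_nat_ivl[of "\<lambda>i. d i * u i k" 0 m m'] by (simp add: add.commute)
    finally show ?thesis
      by (simp add: d_def u_def g h lessThan_atLeast0)
  qed
  moreover have "\<forall>i<m + m'. u i \<in> S"
    using v v' by (simp add: u_def)
  ultimately show ?thesis
    unfolding cspan_seq_def mem_Collect_eq
    by (intro exI[of _ "m + m'"] exI[of _ d] exI[of _ u]) simp
qed

lemma cspan_seq_subset_H2:
  assumes "S \<subseteq> H2"
  shows "cspan_seq S \<subseteq> H2"
proof
  fix g assume "g \<in> cspan_seq S"
  then obtain m :: nat and c v where "\<forall>i<m. v i \<in> S" and g: "g = (\<lambda>k. \<Sum>i<m. c i * v i k)"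
    unfolding cspan_seq_def by blast
  with assms show "g \<in> H2"
    unfolding g by (intro H2_sum(1) H2_scale(1)) auto
qed

definition h2_closed_span :: "(nat \<Rightarrow> complex) set \<Rightarrow> (nat \<Rightarrow> complex) set" where
  "h2_closed_span S = {a \<in> H2. \<forall>e>0. \<exists>g\<in>cspan_seq S. h2_norm (\<lambda>k. a k - g k) < e}"

lemma h2_closed_span_subset_H2: "h2_closed_span S \<subseteq> H2"
  by (auto simp: h2_closed_span_def)

lemma cspan_seq_subset_h2_closed_span:
  assumes "S \<subseteq> H2"
  shows "cspan_seq S \<subseteq> h2_closed_span S"
proof
  fix g assume "g \<in> cspan_seq S"
  moreover have "h2_norm (\<lambda>k. g k - g k) = 0"
    by (simp add: h2_norm_zero)
  ultimately show "g \<in> h2_closed_span S"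
    using cspan_seq_subset_H2[OF assms] unfolding h2_closed_span_def
    by (auto intro!: bexI[of _ g])
qed

lemma h2_closed_span_closed:
  assumes "S \<subseteq> H2" "a \<in> H2"
    and approx: "\<And>e. e > 0 \<Longrightarrow> \<exists>b\<in>h2_closed_span S. h2_norm (\<lambda>k. a k - b k) < e"
  shows "a \<in> h2_closed_span S"
  unfolding h2_closed_span_def
proof (intro CollectI conjI allI impI \<open>a \<in> H2\<close>)
  fix e :: real assume "e > 0"
  then obtain b where b: "b \<in> h2_closed_span S" "h2_norm (\<lambda>k. a k - b k) < e / 2"
    using approx[of "e / 2"] by auto
  moreover have "e / 2 > 0"
    using \<open>e > 0\<close> by simp
  ultimately obtain g where g: "g \<in> cspan_seq S" "h2_norm (\<lambda>k. b k - g k) < e / 2"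
    unfolding h2_closed_span_def by blast
  have "h2_norm (\<lambda>k. a k - g k) \<le> h2_norm (\<lambda>k. a k - b k) + h2_norm (\<lambda>k. b k - g k)"
    using b(1) g(1) cspan_seq_subset_H2[OF assms(1)] h2_closed_span_subset_H2
    by (intro h2_norm_triangle \<open>a \<in> H2\<close>) auto
  with b(2) g(2) g(1) show "\<exists>g\<in>cspan_seq S. h2_norm (\<lambda>k. a k - g k) < e"
    by (intro bexI[of _ g]) simp_all
qed

lemma h2_closed_span_add:
  assumes "S \<subseteq> H2" "a \<in> h2_closed_span S" "b \<in> h2_closed_span S"
  shows "(\<lambda>k. a k + b k) \<in> h2_closed_span S"
  unfolding h2_closed_span_def
proof (intro CollectI conjI allI impI)
  have "a \<in> H2" "b \<in> H2"
    using assms(2,3) h2_closed_span_subset_H2 by auto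
  then show "(\<lambda>k. a k + b k) \<in> H2"
    by (rule H2_add)
  fix e :: real assume "e > 0"
  then have "e / 2 > 0"
    by simp
  then obtain g h where g: "g \<in> cspan_seq S" "h2_norm (\<lambda>k. a k - g k) < e / 2"
    and h: "h \<in> cspan_seq S" "h2_norm (\<lambda>k. b k - h k) < e / 2"
    using assms(2,3) unfolding h2_closed_span_def by blast
  have "g \<in> H2" "h \<in> H2"
    using g(1) h(1) cspan_seq_subset_H2[OF assms(1)] by auto
  then have "h2_norm (\<lambda>k. (a k - g k) + (b k - h k)) \<le> h2_norm (\<lambda>k. a k - g k) + h2_norm (\<lambda>k. b k - h k)"
    using \<open>a \<in> H2\<close> \<open>b \<in> H2\<close> by (intro H2_add(2) H2_diff)
  then have "h2_norm (\<lambda>k. a k + b k - (g k + h k)) < e"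
    using g(2) h(2) by (simp add: algebra_simps)
  then show "\<exists>g\<in>cspan_seq S. h2_norm (\<lambda>k. a k + b k - g k) < e"
    using cspan_seq_add[OF g(1) h(1)] by (intro bexI[of _ "\<lambda>k. g k + h k"])
qed

lemma h2_closed_span_scale:
  assumes "S \<subseteq> H2" "a \<in> h2_closed_span S"
  shows "(\<lambda>k. c * a k) \<in> h2_closed_span S"
  unfolding h2_closed_span_def
proof (intro CollectI conjI allI impI)
  have "a \<in> H2"
    using assms(2) h2_closed_span_subset_H2 by auto
  then show "(\<lambda>k. c * a k) \<in> H2"
    by (rule H2_scale)
  fix e :: real assume "e > 0"
  have pos: "0 < cmod c + 1"
    by (simp add: add_nonneg_pos)
  with \<open>e > 0\<close> have "e / (cmod c + 1) > 0"
    by simp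
  then obtain g where g: "g \<in> cspan_seq S" "h2_norm (\<lambda>k. a k - g k) < e / (cmod c + 1)"
    using assms(2) unfolding h2_closed_span_def by blast
  have diff: "(\<lambda>k. a k - g k) \<in> H2"
    using \<open>a \<in> H2\<close> g(1) cspan_seq_subset_H2[OF assms(1)] by (intro H2_diff) auto
  have "h2_norm (\<lambda>k. c * a k - c * g k) = cmod c * h2_norm (\<lambda>k. a k - g k)"
    using H2_scale(2)[OF diff, of c] by (simp add: algebra_simps)
  also have "\<dots> \<le> (cmod c + 1) * h2_norm (\<lambda>k. a k - g k)"
    by (intro mult_right_mono h2_norm_nonneg[OF diff]) simp
  also have "\<dots> < (cmod c + 1) * (e / (cmod c + 1))"
    using g(2) pos by (intro mult_strict_left_mono)
  also have "\<dots> = e"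
    using pos by simp
  finally show "\<exists>g\<in>cspan_seq S. h2_norm (\<lambda>k. c * a k - g k) < e"
    using cspan_seq_scale[OF g(1), of c] by (intro bexI[of _ "\<lambda>k. c * g k"])
qed

lemma h2_closed_span_sum:
  assumes "S \<subseteq> H2" "finite T" "\<And>i. i \<in> T \<Longrightarrow> b i \<in> h2_closed_span S"
  shows "(\<lambda>k. \<Sum>i\<in>T. c i * b i k) \<in> h2_closed_span S"
  using assms(2,3)
proof (induction T rule: finite_induct)
  case empty
  show ?case
    using cspan_seq_subset_h2_closed_span[OF assms(1)] cspan_seq_zero by auto
next
  case (insert j T)
  then show ?case
    using h2_closed_span_add[OF assms(1) h2_closed_span_scale[OF assms(1)]] by simp
qed

lemma H2_subset_closed_span_if_unit_vecs:
  assumes "S \<subseteq> H2" "\<And>m. unit_vec m \<in> h2_closed_span S"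
  shows "H2 \<subseteq> h2_closed_span S"
proof
  fix f assume "f \<in> H2"
  then have summable: "summable (\<lambda>k. (cmod (f k))\<^sup>2)"
    by (simp add: H2_def)
  show "f \<in> h2_closed_span S"
  proof (rule h2_closed_span_closed[OF assms(1) \<open>f \<in> H2\<close>])
    fix e :: real assume "e > 0"
    then obtain M where M: "\<bar>\<Sum>i. (cmod (f (i + M)))\<^sup>2\<bar> < e\<^sup>2"
      using suminf_exist_split[OF _ summable, of "e\<^sup>2"] by auto
    define b where "b = (\<lambda>k. \<Sum>m<M. f m * unit_vec m k)"
    have b: "b k = (if k < M then f k else 0)" for k
      by (simp add: b_def unit_vec_def if_distrib sum.delta' cong: if_cong)
    have b_closed: "b \<in> h2_closed_span S"
      unfolding b_def by (intro h2_closed_span_sum assms) simp_all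
    have "(\<lambda>i. (cmod (f (i + M) - b (i + M)))\<^sup>2) sums (\<Sum>i. (cmod (f (i + M)))\<^sup>2)"
      using summable_ignore_initial_segment[OF summable, of M] by (simp add: b summable_sums)
    then have "(\<lambda>k. (cmod (f k - b k))\<^sup>2) sums (\<Sum>i. (cmod (f (i + M)))\<^sup>2)"
      by (subst sums_zero_iff_shift[symmetric, of M]) (simp_all add: b)
    then have "h2_norm (\<lambda>k. f k - b k) < e"
      using M \<open>e > 0\<close> by (simp add: h2_norm_def sums_iff real_sqrt_less_iff real_less_lsqrt)
    with b_closed show "\<exists>b\<in>h2_closed_span S. h2_norm (\<lambda>k. f k - b k) < e"
      by blast
  qed
qed

section \<open>The operator W n and its adjoint\<close>

lemma W_W: "W m (W n f) = W (m * n) f"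
  by (simp add: W_def div_mult2_eq)

lemma H2_W:
  assumes "a \<in> H2" "0 < d"
  shows "W d a \<in> H2" and "h2_norm (W d a) = sqrt (real d) * h2_norm a"
proof -
  define f where "f = (\<lambda>k. (cmod (a k))\<^sup>2)"
  define b where "b = (\<lambda>m. (cmod (W d a m))\<^sup>2)"
  have f: "summable f" "\<And>k. 0 \<le> f k"
    using assms(1) by (simp_all add: f_def H2_def)
  have block: "(\<Sum>m\<in>{K * d..<K * d + d}. b m) = real d * f K" for K
    unfolding sum_block_reindex using assms(2) by (simp add: b_def f_def W_def)
  have "(\<Sum>m<M. b m) \<le> real d * suminf f" for M
  proof -
    have "(\<Sum>m<M. b m) \<le> (\<Sum>m<M * d. b m)"
      using assms(2) by (intro sum_mono2) (auto simp: b_def)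
    also have "\<dots> = real d * (\<Sum>k<M. f k)"
      by (simp only: sum.nat_group[symmetric] block sum_distrib_left)
    also have "\<dots> \<le> real d * suminf f"
      using f by (intro mult_left_mono sum_le_suminf) auto
    finally show ?thesis .
  qed
  then have "summable b"
    by (intro summableI_nonneg_bounded) (auto simp: b_def)
  then have "(\<lambda>K. real d * f K) sums suminf b"
    using sums_group[OF summable_sums[OF \<open>summable b\<close>] assms(2)] by (simp only: block)
  then have "suminf b = real d * suminf f"
    using sums_mult[OF summable_sums[OF f(1)], of "real d"] sums_unique2 by blast
  with \<open>summable b\<close> show "W d a \<in> H2" and "h2_norm (W d a) = sqrt (real d) * h2_norm a"
    by (simp_all add: H2_def h2_norm_def b_def f_def real_sqrt_mult)
qed

definition W_adj :: "nat \<Rightarrow> (nat \<Rightarrow> complex) \<Rightarrow> nat \<Rightarrow> complex" where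
  "W_adj n g = (\<lambda>k. \<Sum>j<n. g (n * k + j))"

lemma h2_inner_W:
  assumes "0 < n" "f \<in> H2" "g \<in> H2"
  shows "h2_inner (W n f) g = h2_inner f (W_adj n g)"
proof -
  have "summable (\<lambda>m. W n f m * cnj (g m))"
    using assms by (intro summable_h2_inner H2_W)
  then have "(\<lambda>K. \<Sum>m\<in>{K * n..<K * n + n}. W n f m * cnj (g m)) sums h2_inner (W n f) g"
    unfolding h2_inner_def using assms(1) by (intro sums_group summable_sums)
  moreover have "(\<Sum>m\<in>{K * n..<K * n + n}. W n f m * cnj (g m)) = f K * cnj (W_adj n g K)" for K
    unfolding sum_block_reindex using assms(1) by (simp add: W_def W_adj_def sum_distrib_left)
  ultimately show ?thesis
    unfolding h2_inner_def by (simp add: sums_iff)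
qed

lemma adjoint_H2_W:
  assumes "0 < n" "g \<in> H2" "W_adj n g \<in> H2"
  shows "adjoint_H2 (W n) g = W_adj n g"
  unfolding adjoint_H2_def
proof (rule the_equality)
  show "W_adj n g \<in> H2 \<and> (\<forall>f\<in>H2. h2_inner (W n f) g = h2_inner f (W_adj n g))"
    using assms h2_inner_W by blast
  fix h assume h: "h \<in> H2 \<and> (\<forall>f\<in>H2. h2_inner (W n f) g = h2_inner f h)"
  show "h = W_adj n g"
  proof
    fix q
    have "cnj (h q) = h2_inner (W n (unit_vec q)) g"
      using h unit_vec_in_H2 by (simp add: h2_inner_unit_vec)
    also have "\<dots> = cnj (W_adj n g q)"
      using assms by (simp add: h2_inner_W unit_vec_in_H2 h2_inner_unit_vec)
    finally show "h q = W_adj n g q"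
      by simp
  qed
qed

lemma W_adj_W:
  assumes "0 < n"
  shows "W_adj n (W n f) = (\<lambda>k. of_nat n * f k)"
  using assms by (simp add: W_adj_def W_def)

lemma W_adj_unit_vec:
  assumes "0 < n"
  shows "W_adj n (unit_vec q) = unit_vec (q div n)"
proof
  fix k
  have "n * k + j = q \<longleftrightarrow> k = q div n \<and> j = q mod n" if "j < n" for j
    using that assms by (auto intro: div_nat_eqI mod_nat_eqI)
  then have "W_adj n (unit_vec q) k = (\<Sum>j<n. if k = q div n \<and> j = q mod n then 1 else 0)"
    unfolding W_adj_def unit_vec_def by (intro sum.cong) auto
  also have "\<dots> = unit_vec (q div n) k"
    using assms by (simp add: unit_vec_def sum.delta')
  finally show "W_adj n (unit_vec q) k = unit_vec (q div n) k" .
qed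

(* The component of f in ker W_n^*, the wandering subspace of the isometry W_n / sqrt n. *)
definition wandering_part :: "nat \<Rightarrow> (nat \<Rightarrow> complex) \<Rightarrow> nat \<Rightarrow> complex" where
  "wandering_part n f = (\<lambda>k. f k - W n (W_adj n f) k / of_nat n)"

lemma W_adj_wandering_part:
  assumes "0 < n"
  shows "W_adj n (wandering_part n f) = (\<lambda>_. 0)"
proof -
  have "W_adj n (wandering_part n f) = (\<lambda>k. W_adj n f k - W_adj n (W n (W_adj n f)) k / of_nat n)"
    by (simp add: W_adj_def wandering_part_def sum_subtractf sum_divide_distrib)
  with assms show ?thesis
    by (simp add: W_adj_W)
qed

lemma wandering_part_in_H2:
  assumes "0 < n" "f \<in> H2" "W_adj n f \<in> H2"
  shows "wandering_part n f \<in> H2"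
  using H2_diff[OF assms(2) H2_scale(1)[OF H2_W(1)[OF assms(3,1)], of "1 / of_nat n"]]
  by (simp add: wandering_part_def)

lemma unit_vec_telescope:
  assumes "0 < n"
  shows "unit_vec m k = (\<Sum>p<P. W (n ^ p) (wandering_part n (unit_vec (m div n ^ p))) k / of_nat n ^ p)
    + W (n ^ P) (unit_vec (m div n ^ P)) k / of_nat n ^ P"
proof (induction P)
  case (Suc P)
  let ?q = "m div n ^ P"
  have "unit_vec ?q j = wandering_part n (unit_vec ?q) j + W n (unit_vec (?q div n)) j / of_nat n" for j
    using assms by (simp add: wandering_part_def W_adj_unit_vec)
  from this[of "k div n ^ P"]
  have "W (n ^ P) (unit_vec ?q) k
      = W (n ^ P) (wandering_part n (unit_vec ?q)) k + W (n ^ Suc P) (unit_vec (m div n ^ Suc P)) k / of_nat n"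
    by (simp add: W_def div_mult2_eq power_Suc2 del: power_Suc)
  with Suc show ?case
    by (simp add: add_divide_distrib algebra_simps)
qed (simp add: W_def)

section \<open>Eigenvectors of the adjoint\<close>

definition W_power_series :: "nat \<Rightarrow> (nat \<Rightarrow> complex) \<Rightarrow> (nat \<Rightarrow> complex) \<Rightarrow> nat \<Rightarrow> complex" where
  "W_power_series n \<beta> s = (\<lambda>k. \<Sum>i. \<beta> i * W (n ^ i) s k)"

lemma H2_W_power_series:
  assumes "s \<in> H2" "0 < n" "summable (\<lambda>i. cmod (\<beta> i) * sqrt (real n) ^ i)"
  shows "summable (\<lambda>i. \<beta> i * W (n ^ i) s k)" and "W_power_series n \<beta> s \<in> H2"
    and "h2_norm (W_power_series n \<beta> s) \<le> (\<Sum>i. cmod (\<beta> i) * sqrt (real n) ^ i) * h2_norm s"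
proof -
  define x where "x i = (\<lambda>k. \<beta> i * W (n ^ i) s k)" for i
  have "W (n ^ i) s \<in> H2" and "h2_norm (W (n ^ i) s) = sqrt (real n) ^ i * h2_norm s" for i
    using H2_W[OF assms(1), of "n ^ i"] assms(2) by (simp_all add: real_sqrt_power)
  then have "x i \<in> H2" and "h2_norm (x i) = cmod (\<beta> i) * sqrt (real n) ^ i * h2_norm s" for i
    unfolding x_def by (simp_all add: H2_scale)
  moreover have "summable (\<lambda>i. cmod (\<beta> i) * sqrt (real n) ^ i * h2_norm s)"
    using assms(3) by (rule summable_mult2)
  ultimately have "summable (\<lambda>i. x i k)" and "(\<lambda>k. \<Sum>i. x i k) \<in> H2"
    and "h2_norm (\<lambda>k. \<Sum>i. x i k) \<le> (\<Sum>i. cmod (\<beta> i) * sqrt (real n) ^ i * h2_norm s)"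
    by (intro H2_suminf; simp)+
  then show "summable (\<lambda>i. \<beta> i * W (n ^ i) s k)" and "W_power_series n \<beta> s \<in> H2"
    and "h2_norm (W_power_series n \<beta> s) \<le> (\<Sum>i. cmod (\<beta> i) * sqrt (real n) ^ i) * h2_norm s"
    unfolding W_power_series_def x_def using suminf_mult2[OF assms(3)] by simp_all
qed

lemma W_power_series_lincomb:
  assumes "finite J" "\<And>j k. j \<in> J \<Longrightarrow> summable (\<lambda>i. \<beta> j i * W (n ^ i) s k)"
  shows "(\<lambda>k. \<Sum>j\<in>J. a j * W_power_series n (\<beta> j) s k) = W_power_series n (\<lambda>i. \<Sum>j\<in>J. a j * \<beta> j i) s"
proof
  fix k
  have "(\<Sum>j\<in>J. a j * W_power_series n (\<beta> j) s k) = (\<Sum>j\<in>J. \<Sum>i. a j * (\<beta> j i * W (n ^ i) s k))"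
    unfolding W_power_series_def using assms(2) by (simp add: suminf_mult)
  also have "\<dots> = (\<Sum>i. \<Sum>j\<in>J. a j * (\<beta> j i * W (n ^ i) s k))"
    using assms by (intro suminf_sum[symmetric] summable_mult)
  also have "\<dots> = W_power_series n (\<lambda>i. \<Sum>j\<in>J. a j * \<beta> j i) s k"
    unfolding W_power_series_def by (simp add: sum_distrib_right mult.assoc)
  finally show "(\<Sum>j\<in>J. a j * W_power_series n (\<beta> j) s k) = W_power_series n (\<lambda>i. \<Sum>j\<in>J. a j * \<beta> j i) s k" .
qed

lemma W_power_series_remove_term:
  assumes "summable (\<lambda>i. \<beta> i * W (n ^ i) s k)"
  shows "W_power_series n \<beta> s k = \<beta> p * W (n ^ p) s k + W_power_series n (\<beta>(p := 0)) s k"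
proof -
  let ?x = "\<lambda>i. W (n ^ i) s k"
  have eq: "(\<lambda>i. (\<beta>(p := 0)) i * ?x i) = (\<lambda>i. \<beta> i * ?x i - (if i = p then \<beta> p * ?x p else 0))"
    by (simp add: fun_eq_iff)
  have "(\<lambda>i. (\<beta>(p := 0)) i * ?x i) sums (W_power_series n \<beta> s k - \<beta> p * ?x p)"
    unfolding eq W_power_series_def by (intro sums_diff sums_single summable_sums assms)
  then show ?thesis
    unfolding W_power_series_def by (simp add: sums_iff)
qed

lemma W_adj_W_power_series:
  assumes "0 < n" "W_adj n s = (\<lambda>_. 0)" "\<And>k. summable (\<lambda>i. \<beta> i * W (n ^ i) s k)"
  shows "W_adj n (W_power_series n \<beta> s) = W_power_series n (\<lambda>i. of_nat n * \<beta> (Suc i)) s"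
proof
  fix k
  define g where "g = (\<lambda>i. \<beta> i * W_adj n (W (n ^ i) s) k)"
  have "W_adj n (W_power_series n \<beta> s) k = (\<Sum>i. \<Sum>j<n. \<beta> i * W (n ^ i) s (n * k + j))"
    unfolding W_adj_def W_power_series_def using assms(3) by (intro suminf_sum[symmetric])
  also have "\<dots> = suminf g"
    by (simp add: g_def W_adj_def sum_distrib_left)
  also have "\<dots> = (\<Sum>i. g (Suc i))"
  proof -
    have "summable g"
      unfolding g_def W_adj_def sum_distrib_left using assms(3) by (intro summable_sum)
    moreover have "g 0 = 0"
      using assms(2) by (simp add: g_def W_def)
    ultimately show ?thesis
      by (simp add: suminf_split_head)
  qed
  also have "\<dots> = W_power_series n (\<lambda>i. of_nat n * \<beta> (Suc i)) s k"
  proof -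
    have "W (n ^ Suc i) s = W n (W (n ^ i) s)" for i
      by (simp add: W_W)
    then show ?thesis
      using assms(1) by (simp add: g_def W_power_series_def W_adj_W mult.left_commute mult.assoc del: power_Suc)
  qed
  finally show "W_adj n (W_power_series n \<beta> s) k = W_power_series n (\<lambda>i. of_nat n * \<beta> (Suc i)) s k" .
qed

lemma summable_geometric_weight:
  assumes "0 < n" "cmod lam < sqrt (real n)"
  shows "summable (\<lambda>i. cmod ((lam / of_nat n) ^ i) * sqrt (real n) ^ i)"
proof -
  have "summable (\<lambda>i. (cmod lam / sqrt (real n)) ^ i)"
    using assms by (intro summable_geometric) simp
  then show ?thesis
    by (simp only: norm_power_div_mult_sqrt[OF assms(1)])
qed

lemma W_power_series_geometric_eigenvector:
  assumes "0 < n" "s \<in> H2" "W_adj n s = (\<lambda>_. 0)" "cmod lam < sqrt (real n)"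
  shows "W_power_series n (\<lambda>i. (lam / of_nat n) ^ i) s \<in> eigenspace_H2 (adjoint_H2 (W n)) lam"
proof -
  let ?v = "W_power_series n (\<lambda>i. (lam / of_nat n) ^ i) s"
  note v = H2_W_power_series[OF assms(2,1) summable_geometric_weight[OF assms(1,4)]]
  have "W_adj n ?v = W_power_series n (\<lambda>i. lam * (lam / of_nat n) ^ i) s"
    using assms(1) by (simp add: W_adj_W_power_series[OF assms(1,3) v(1)])
  also have "\<dots> = (\<lambda>k. lam * ?v k)"
    unfolding W_power_series_def using v(1) by (simp add: suminf_mult mult.assoc)
  finally have eq: "W_adj n ?v = (\<lambda>k. lam * ?v k)" .
  then have "adjoint_H2 (W n) ?v = (\<lambda>k. lam * ?v k)"
    using adjoint_H2_W[OF assms(1) v(2)] H2_scale(1)[OF v(2)] by simp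
  with v(2) show ?thesis
    by (simp add: eigenspace_H2_def)
qed

definition eigvecs_outside_unit_disc :: "nat \<Rightarrow> (nat \<Rightarrow> complex) set" where
  "eigvecs_outside_unit_disc n =
    (\<Union>lam\<in>{lam::complex. cmod lam > 1}. eigenspace_H2 (adjoint_H2 (W n)) lam)"

lemma eigvecs_outside_unit_disc_subset_H2: "eigvecs_outside_unit_disc n \<subseteq> H2"
  by (auto simp: eigvecs_outside_unit_disc_def eigenspace_H2_def)

(* Averaging the eigenvectors for the eigenvalues c w^j, w = exp (2 pi i / N), against w^-jp
   keeps exactly the terms i = p (mod N) of their power series. *)
lemma root_filtered_W_power_series_in_cspan:
  assumes "0 < n" "s \<in> H2" "W_adj n s = (\<lambda>_. 0)" "1 < c" "c < sqrt (real n)" "p < N"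
  defines "z \<equiv> complex_of_real c / of_nat n"
  shows "W_power_series n (\<lambda>i. if i mod N = p then z ^ i / z ^ p else 0) s
           \<in> cspan_seq (eigvecs_outside_unit_disc n)"
proof -
  define \<omega> :: complex where "\<omega> = exp (2 * of_real pi * \<i> / of_nat N)"
  define lam where "lam j = complex_of_real c * \<omega> ^ j" for j
  define a where "a j = 1 / (of_nat N * z ^ p * \<omega> ^ (j * p))" for j
  define v where "v j = W_power_series n (\<lambda>i. (lam j / of_nat n) ^ i) s" for j
  have norm_lam: "cmod (lam j) = c" for j
    using assms(4) by (simp add: lam_def \<omega>_def norm_mult norm_power norm_exp_i_times)
  have "v j \<in> eigenspace_H2 (adjoint_H2 (W n)) (lam j)" for j
    unfolding v_def using assms(1-5) norm_lam by (intro W_power_series_geometric_eigenvector) simp_all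
  then have "v j \<in> eigvecs_outside_unit_disc n" for j
    using norm_lam assms(4) unfolding eigvecs_outside_unit_disc_def by fastforce
  moreover have "(\<lambda>k. \<Sum>j<N. a j * v j k) = W_power_series n (\<lambda>i. if i mod N = p then z ^ i / z ^ p else 0) s"
  proof -
    have "z \<noteq> 0"
      using assms(1,4) by (simp add: z_def)
    have "(\<Sum>j<N. a j * (lam j / of_nat n) ^ i) = (if i mod N = p then z ^ i / z ^ p else 0)" for i
    proof -
      have "lam j / of_nat n = z * \<omega> ^ j" for j
        by (simp add: lam_def z_def)
      then have "(\<Sum>j<N. a j * (lam j / of_nat n) ^ i) = (\<Sum>j<N. (z * \<omega> ^ j) ^ i / \<omega> ^ (j * p)) / (of_nat N * z ^ p)"
        unfolding sum_divide_distrib a_def by (intro sum.cong refl) (simp add: divide_inverse mult_ac)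
      also have "\<dots> = (if i mod N = p then z ^ i / z ^ p else 0)"
        using \<open>z \<noteq> 0\<close> assms(6) by (simp add: sum_roots_of_unity_filter[OF assms(6), of z i, folded \<omega>_def])
      finally show ?thesis .
    qed
    moreover have "summable (\<lambda>i. (lam j / of_nat n) ^ i * W (n ^ i) s k)" for j k
      using assms norm_lam by (intro H2_W_power_series(1) summable_geometric_weight) auto
    ultimately show ?thesis
      unfolding v_def by (simp add: W_power_series_lincomb)
  qed
  ultimately show ?thesis
    unfolding cspan_seq_def by (intro CollectI exI[of _ N] exI[of _ a] exI[of _ v]) simp
qed

lemma h2_norm_root_filtered_tail:
  assumes "0 < n" "s \<in> H2" "0 < c" "c < sqrt (real n)" "p < N"
  defines "z \<equiv> complex_of_real c / of_nat n" and "r \<equiv> c / sqrt (real n)"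
  shows "h2_norm (\<lambda>k. W (n ^ p) s k - W_power_series n (\<lambda>i. if i mod N = p then z ^ i / z ^ p else 0) s k)
           \<le> (real n / c) ^ p * r ^ N / (1 - r) * h2_norm s"
proof -
  define K where "K = (real n / c) ^ p"
  define \<beta> where "\<beta> i = (if i mod N = p then z ^ i / z ^ p else 0)" for i
  have "0 \<le> K" and r: "0 \<le> r" "r < 1"
    using assms(1,3,4) by (simp_all add: K_def r_def)
  have weight: "cmod (\<beta> i) * sqrt (real n) ^ i = (if i mod N = p then K * r ^ i else 0)" for i
  proof -
    have "cmod (z ^ i) * sqrt (real n) ^ i = r ^ i"
      unfolding z_def norm_power_div_mult_sqrt[OF assms(1)] using assms(3) by (simp add: r_def)
    moreover have "cmod (z ^ p) = (c / real n) ^ p"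
      using assms(3) by (simp add: z_def norm_power norm_divide)
    ultimately show ?thesis
      by (simp add: \<beta>_def K_def norm_divide power_divide)
  qed
  have bound: "summable (\<lambda>i. cmod (\<gamma> i) * sqrt (real n) ^ i)"
    "(\<Sum>i. cmod (\<gamma> i) * sqrt (real n) ^ i) \<le> K * r ^ M / (1 - r)"
    if "\<And>i. cmod (\<gamma> i) * sqrt (real n) ^ i \<le> (if M \<le> i then K * r ^ i else 0)" for \<gamma> M
    using suminf_le_geometric_tail[OF r _ that] by simp_all
  have "cmod (\<beta> i) * sqrt (real n) ^ i \<le> (if 0 \<le> i then K * r ^ i else 0)" for i
    using r \<open>0 \<le> K\<close> by (simp add: weight)
  note \<beta>_series = H2_W_power_series[OF assms(2,1) bound(1)[OF this]]
  have "cmod ((\<beta>(p := 0)) i) * sqrt (real n) ^ i \<le> (if N \<le> i then K * r ^ i else 0)" for i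
    using r \<open>0 \<le> K\<close> weight[of i] by (cases "i < N") auto
  note tail = bound[OF this] H2_W_power_series[OF assms(2,1) bound(1)[OF this]]
  have "\<beta> p = 1"
    using assms(1,3,5) by (simp add: \<beta>_def z_def)
  then have "(\<lambda>k. W (n ^ p) s k - W_power_series n \<beta> s k) = (\<lambda>k. - W_power_series n (\<beta>(p := 0)) s k)"
    using W_power_series_remove_term[OF \<beta>_series(1), where p = p] by simp
  then have "h2_norm (\<lambda>k. W (n ^ p) s k - W_power_series n \<beta> s k) = h2_norm (W_power_series n (\<beta>(p := 0)) s)"
    by (simp add: h2_norm_def)
  also have "\<dots> \<le> K * r ^ N / (1 - r) * h2_norm s"
    using tail(5) tail(2) h2_norm_nonneg[OF assms(2)] by (meson mult_right_mono order_trans)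
  finally show ?thesis
    unfolding \<beta>_def K_def .
qed

lemma W_power_in_closed_span:
  assumes "2 \<le> n" "s \<in> H2" "W_adj n s = (\<lambda>_. 0)"
  shows "W (n ^ p) s \<in> h2_closed_span (eigvecs_outside_unit_disc n)"
proof (rule h2_closed_span_closed[OF eigvecs_outside_unit_disc_subset_H2])
  have "0 < n"
    using assms(1) by simp
  then show "W (n ^ p) s \<in> H2"
    using assms(2) by (simp add: H2_W)
  fix e :: real assume "e > 0"
  have "1 < sqrt (real n)"
    using assms(1) by simp
  then obtain c where c: "1 < c" "c < sqrt (real n)"
    using dense by blast
  define r where "r = c / sqrt (real n)"
  have "0 \<le> r" "r < 1"
    using c \<open>0 < n\<close> by (simp_all add: r_def)
  then have "(\<lambda>N. (real n / c) ^ p * r ^ N / (1 - r) * h2_norm s) \<longlonglongrightarrow> (real n / c) ^ p * 0 / (1 - r) * h2_norm s"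
    by (intro tendsto_intros LIMSEQ_power_zero) simp_all
  then have "\<forall>\<^sub>F N in sequentially. (real n / c) ^ p * r ^ N / (1 - r) * h2_norm s < e \<and> p < N"
    using \<open>e > 0\<close> by (intro eventually_conj order_tendstoD(2) eventually_gt_at_top) simp_all
  then obtain N where N: "(real n / c) ^ p * r ^ N / (1 - r) * h2_norm s < e" "p < N"
    unfolding eventually_sequentially by blast
  with h2_norm_root_filtered_tail[OF \<open>0 < n\<close> assms(2) _ c(2) N(2)] c(1)
    root_filtered_W_power_series_in_cspan[OF \<open>0 < n\<close> assms(2,3) c N(2)]
    cspan_seq_subset_h2_closed_span[OF eigvecs_outside_unit_disc_subset_H2]
  show "\<exists>b\<in>h2_closed_span (eigvecs_outside_unit_disc n). h2_norm (\<lambda>k. W (n ^ p) s k - b k) < e"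
    unfolding r_def by (intro bexI) auto
qed

lemma unit_vec_in_closed_span:
  assumes "2 \<le> n"
  shows "unit_vec m \<in> h2_closed_span (eigvecs_outside_unit_disc n)"
proof (rule h2_closed_span_closed[OF eigvecs_outside_unit_disc_subset_H2 unit_vec_in_H2])
  have "0 < n"
    using assms by simp
  fix e :: real assume "e > 0"
  moreover have "1 < sqrt (real n)"
    using assms by simp
  ultimately obtain P where P: "(1 / sqrt (real n)) ^ P < e"
    using real_arch_pow_inv[of e "1 / sqrt (real n)"] by auto
  define b where "b = (\<lambda>k. \<Sum>p<P. (1 / of_nat n ^ p) * W (n ^ p) (wandering_part n (unit_vec (m div n ^ p))) k)"
  have b: "b \<in> h2_closed_span (eigvecs_outside_unit_disc n)"
    unfolding b_def using \<open>0 < n\<close>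
    by (intro h2_closed_span_sum[OF eigvecs_outside_unit_disc_subset_H2] W_power_in_closed_span
        assms wandering_part_in_H2 W_adj_wandering_part) (simp_all add: W_adj_unit_vec unit_vec_in_H2)
  have W_unit_vec: "W (n ^ P) (unit_vec q) \<in> H2" "h2_norm (W (n ^ P) (unit_vec q)) = sqrt (real n) ^ P" for q
    using H2_W[OF unit_vec_in_H2, of "n ^ P" q] \<open>0 < n\<close> by (simp_all add: h2_norm_unit_vec real_sqrt_power)
  have "(\<lambda>k. unit_vec m k - b k) = (\<lambda>k. (1 / of_nat n ^ P) * W (n ^ P) (unit_vec (m div n ^ P)) k)"
    using unit_vec_telescope[OF \<open>0 < n\<close>, of m _ P] by (simp add: b_def fun_eq_iff)
  then have "h2_norm (\<lambda>k. unit_vec m k - b k) = cmod (1 / of_nat n ^ P) * sqrt (real n) ^ P"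
    by (simp only: H2_scale(2)[OF W_unit_vec(1)] W_unit_vec(2))
  also have "\<dots> = (1 / sqrt (real n)) ^ P"
    using norm_power_div_mult_sqrt[OF \<open>0 < n\<close>, of 1 P] by (simp add: power_one_over)
  finally have "h2_norm (\<lambda>k. unit_vec m k - b k) = (1 / sqrt (real n)) ^ P" .
  with b P show "\<exists>b\<in>h2_closed_span (eigvecs_outside_unit_disc n). h2_norm (\<lambda>k. unit_vec m k - b k) < e"
    by (intro bexI[of _ b]) simp_all
qed

theorem mainTheorem6:
  fixes n :: nat
  assumes "n \<ge> 2"
  shows "dense_in_H2 (cspan_seq (\<Union>lam\<in>{lam::complex. cmod lam > 1}. eigenspace_H2 (adjoint_H2 (W n)) lam))"
proof -
  have "H2 \<subseteq> h2_closed_span (eigvecs_outside_unit_disc n)"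
    using assms by (intro H2_subset_closed_span_if_unit_vecs eigvecs_outside_unit_disc_subset_H2
        unit_vec_in_closed_span)
  then show ?thesis
    unfolding dense_in_H2_def eigvecs_outside_unit_disc_def[symmetric] h2_closed_span_def by blast
qed

end
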